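(* Let $\mathbb{K}$ be a field and $f=a_0(x)+a_1(x)y+\cdots+a_n(x)y^n\in\mathbb{K}[x,y]$ with $n\geq 2$, $a_0,\ldots,a_n\in\mathbb{K}[x]$, $a_0a_n\neq 0$. Assume that $f$ has no nonconstant factor in $\mathbb{K}[x]$. If there exists an index $j$ with $0\leq j\leq n-1$ such that $$\deg a_j>\max_{i\neq j}\{\deg a_i+(j-i)\deg a_n\},$$ then $f$ is a product of at most $n-j$ irreducible polynomials over $\mathbb{K}[x]$. In particular, if $j=n-1$, then $f$ is irreducible over $\mathbb{K}[x]$.
   Context: $f$ is regarded as a polynomial in $y$ with coefficients in $\mathbb{K}[x]$; "a product of at most $k$ irreducible polynomials over $\mathbb{K}[x]$" means that in the factorization of $f$ into irreducible elements of $\mathbb{K}[x][y]$ the number of factors, counted with multiplicities, is at most $k$. *)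

theory Defs
  imports "HOL-Computational_Algebra.Polynomial_Factorial"
begin

end

theory Submission
  imports Defs
begin

text \<open>Give the monomial \<open>x\<^sup>p y\<^sup>q\<close> the weight \<open>p - q d\<close>, where \<open>d = deg a\<^sub>n\<close>, and let
  \<open>\<iota>(g)\<close> be the smallest \<open>y\<close>-exponent among the terms of \<open>g\<close> of maximal weight. Since the
  parts of maximal weight multiply, \<open>\<iota>\<close> is additive, hence so is \<open>deg\<^sub>y g - \<iota>(g)\<close>.
  The hypothesis says \<open>\<iota>(f) = j\<close>. Every factor \<open>g\<close> of \<open>f\<close> has a nonzero constant term
  and a leading coefficient of degree at most \<open>d\<close>, so its constant term weighs at least as
  much as its leading term and \<open>\<iota>(g) < deg\<^sub>y g\<close> as soon as \<open>g\<close> is not constant, which is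
  the case for every non-unit factor because \<open>f\<close> has no nonconstant factor in \<open>K[x]\<close>. Thus every
  irreducible factor contributes at least one to \<open>deg\<^sub>y f - \<iota>(f) = n - j\<close>.\<close>

lemma irreducible_factorization_length_le:
  fixes f :: "'a::comm_semiring_1" and \<delta> :: "'a \<Rightarrow> nat"
  assumes "f \<noteq> 0" and "\<not> f dvd 1"
    and superadditive: "\<And>a b. a \<noteq> 0 \<Longrightarrow> b \<noteq> 0 \<Longrightarrow> \<delta> a + \<delta> b \<le> \<delta> (a * b)"
    and positive: "\<And>g. g dvd f \<Longrightarrow> \<not> g dvd 1 \<Longrightarrow> \<delta> g \<ge> 1"
  shows "\<exists>fs. length fs \<le> \<delta> f \<and> (\<forall>g\<in>set fs. irreducible g) \<and> f = prod_list fs"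
proof -
  have "\<exists>fs. length fs \<le> \<delta> g \<and> (\<forall>h\<in>set fs. irreducible h) \<and> g = prod_list fs"
    if "g dvd f" "\<not> g dvd 1" for g
    using that
  proof (induction "\<delta> g" arbitrary: g rule: less_induct)
    case less
    show ?case
    proof (cases "irreducible g")
      case True
      then show ?thesis using positive[OF less.prems] by (intro exI[of _ "[g]"]) auto
    next
      case False
      have "g \<noteq> 0" using less.prems(1) \<open>f \<noteq> 0\<close> by auto
      with False less.prems(2) obtain a b where ab: "g = a * b" "\<not> a dvd 1" "\<not> b dvd 1"
        unfolding irreducible_def by blast
      have "a dvd f" "b dvd f" using less.prems(1) ab(1) by (auto intro: dvd_trans)
      have "a \<noteq> 0" "b \<noteq> 0" using \<open>g \<noteq> 0\<close> ab(1) by auto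
      have "\<delta> a + \<delta> b \<le> \<delta> g" "\<delta> a \<ge> 1" "\<delta> b \<ge> 1"
        using superadditive[OF \<open>a \<noteq> 0\<close> \<open>b \<noteq> 0\<close>] positive \<open>a dvd f\<close> \<open>b dvd f\<close> ab by auto
      then have "\<delta> a < \<delta> g" "\<delta> b < \<delta> g" by linarith+
      obtain fa where "length fa \<le> \<delta> a" "\<forall>h\<in>set fa. irreducible h" "a = prod_list fa"
        using less.hyps[OF \<open>\<delta> a < \<delta> g\<close> \<open>a dvd f\<close> ab(2)] by blast
      moreover obtain fb where "length fb \<le> \<delta> b" "\<forall>h\<in>set fb. irreducible h" "b = prod_list fb"
        using less.hyps[OF \<open>\<delta> b < \<delta> g\<close> \<open>b dvd f\<close> ab(3)] by blast
      ultimately show ?thesis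
        using ab(1) \<open>\<delta> a + \<delta> b \<le> \<delta> g\<close> by (intro exI[of _ "fa @ fb"]) auto
    qed
  qed
  from this[OF dvd_refl assms(2)] show ?thesis .
qed

definition weighted_degree :: "int \<Rightarrow> 'a::zero poly poly \<Rightarrow> nat \<Rightarrow> int" where
  "weighted_degree t P i = int (degree (coeff P i)) + int i * t"

definition is_weighted_initial :: "int \<Rightarrow> 'a::zero poly poly \<Rightarrow> nat \<Rightarrow> bool" where
  "is_weighted_initial t P l \<longleftrightarrow> coeff P l \<noteq> 0 \<and>
     (\<forall>i. coeff P i \<noteq> 0 \<longrightarrow> weighted_degree t P i \<le> weighted_degree t P l \<and>
                         (i < l \<longrightarrow> weighted_degree t P i < weighted_degree t P l))"

definition weighted_initial :: "int \<Rightarrow> 'a::zero poly poly \<Rightarrow> nat" where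
  "weighted_initial t P = (THE l. is_weighted_initial t P l)"

lemma is_weighted_initial_unique:
  assumes "is_weighted_initial t P l" and "is_weighted_initial t P l'"
  shows "l = l'"
  using assms unfolding is_weighted_initial_def
  by (metis linorder_neqE_nat order.strict_iff_not)

lemma is_weighted_initial_exists:
  fixes P :: "'a::zero poly poly"
  assumes "P \<noteq> 0"
  shows "\<exists>l. is_weighted_initial t P l"
proof -
  define S where "S = weighted_degree t P ` {i. coeff P i \<noteq> 0}"
  have "finite S" unfolding S_def
    by (rule finite_imageI, rule finite_subset[of _ "{..degree P}"]) (auto intro: le_degree)
  moreover have "weighted_degree t P (degree P) \<in> S" using assms unfolding S_def by auto
  ultimately have "Max S \<in> S" and le_Max: "\<And>i. coeff P i \<noteq> 0 \<Longrightarrow> weighted_degree t P i \<le> Max S"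
    unfolding S_def by (auto intro: Max_in)
  then obtain i0 where i0: "coeff P i0 \<noteq> 0 \<and> weighted_degree t P i0 = Max S"
    unfolding S_def by auto
  define l where "l = (LEAST i. coeff P i \<noteq> 0 \<and> weighted_degree t P i = Max S)"
  have l: "coeff P l \<noteq> 0 \<and> weighted_degree t P l = Max S"
    unfolding l_def using i0 by (rule LeastI)
  have "weighted_degree t P i < Max S" if "i < l" "coeff P i \<noteq> 0" for i
    using not_less_Least[OF that(1)[unfolded l_def]] le_Max[OF that(2)] that(2) by auto
  with l le_Max have "is_weighted_initial t P l"
    unfolding is_weighted_initial_def by auto
  then show ?thesis ..
qed

lemma weighted_initial_eqI: "is_weighted_initial t P l \<Longrightarrow> weighted_initial t P = l"
  unfolding weighted_initial_def by (blast intro: the_equality is_weighted_initial_unique)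

lemma is_weighted_initial_weighted_initial:
  fixes P :: "'a::zero poly poly"
  shows "P \<noteq> 0 \<Longrightarrow> is_weighted_initial t P (weighted_initial t P)"
  using is_weighted_initial_exists weighted_initial_eqI by metis

lemma weighted_initial_le_degree:
  fixes P :: "'a::zero poly poly"
  shows "P \<noteq> 0 \<Longrightarrow> weighted_initial t P \<le> degree P"
  using is_weighted_initial_weighted_initial le_degree unfolding is_weighted_initial_def by blast

lemma degree_convolution_le:
  fixes a b :: "'a::idom poly poly"
  assumes "S \<subseteq> {..k}" and "(\<Sum>i\<in>S. coeff a i * coeff b (k - i)) \<noteq> 0"
    and bound: "\<And>i. i \<in> S \<Longrightarrow> coeff a i \<noteq> 0 \<Longrightarrow> coeff b (k - i) \<noteq> 0 \<Longrightarrow>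
                  weighted_degree t a i + weighted_degree t b (k - i) \<le> B"
  shows "int (degree (\<Sum>i\<in>S. coeff a i * coeff b (k - i))) + int k * t \<le> B"
proof -
  have term_le: "int (degree (coeff a i * coeff b (k - i))) \<le> B - int k * t"
    if "i \<in> S" "coeff a i * coeff b (k - i) \<noteq> 0" for i
  proof -
    have "i \<le> k" "coeff a i \<noteq> 0" "coeff b (k - i) \<noteq> 0" using assms(1) that by auto
    then show ?thesis
      using bound[OF that(1)] by (simp add: degree_mult_eq weighted_degree_def of_nat_diff algebra_simps)
  qed
  obtain i where "i \<in> S" "coeff a i * coeff b (k - i) \<noteq> 0"
    using assms(2) by (meson sum.neutral)
  from term_le[OF this] have "B - int k * t \<ge> 0" by linarith
  moreover have "degree (\<Sum>i\<in>S. coeff a i * coeff b (k - i)) \<le> nat (B - int k * t)"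
  proof (rule degree_sum_le)
    show "finite S" using assms(1) finite_subset by blast
  next
    fix i assume "i \<in> S"
    with term_le[of i] show "degree (coeff a i * coeff b (k - i)) \<le> nat (B - int k * t)"
      by (cases "coeff a i * coeff b (k - i) = 0") auto
  qed
  ultimately show ?thesis by linarith
qed

lemma weighted_degree_coeff_mult_le:
  fixes a b :: "'a::idom poly poly"
  assumes "coeff (a * b) m \<noteq> 0"
    and "\<And>i. i \<le> m \<Longrightarrow> coeff a i \<noteq> 0 \<Longrightarrow> coeff b (m - i) \<noteq> 0 \<Longrightarrow>
           weighted_degree t a i + weighted_degree t b (m - i) \<le> B"
  shows "weighted_degree t (a * b) m \<le> B"
proof -
  have "int (degree (\<Sum>i\<in>{..m}. coeff a i * coeff b (m - i))) + int m * t \<le> B"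
    by (rule degree_convolution_le) (use assms in \<open>simp_all add: coeff_mult\<close>)
  then show ?thesis by (simp add: weighted_degree_def coeff_mult)
qed

text \<open>The only term of \<open>coeff (a * b) (la + lb)\<close> of maximal weight is \<open>coeff a la * coeff b lb\<close>;
  every other term involves an index left of \<open>la\<close> or of \<open>lb\<close>.\<close>

lemma is_weighted_initial_mult:
  fixes a b :: "'a::idom poly poly"
  assumes "is_weighted_initial t a la" and "is_weighted_initial t b lb"
  shows "is_weighted_initial t (a * b) (la + lb)"
proof -
  have "coeff a la \<noteq> 0" "coeff b lb \<noteq> 0"
    and a_le: "\<And>i. coeff a i \<noteq> 0 \<Longrightarrow> weighted_degree t a i \<le> weighted_degree t a la"
    and a_less: "\<And>i. coeff a i \<noteq> 0 \<Longrightarrow> i < la \<Longrightarrow> weighted_degree t a i < weighted_degree t a la"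
    and b_le: "\<And>i. coeff b i \<noteq> 0 \<Longrightarrow> weighted_degree t b i \<le> weighted_degree t b lb"
    and b_less: "\<And>i. coeff b i \<noteq> 0 \<Longrightarrow> i < lb \<Longrightarrow> weighted_degree t b i < weighted_degree t b lb"
    using assms unfolding is_weighted_initial_def by auto
  define M where "M = weighted_degree t a la + weighted_degree t b lb"
  define k where "k = la + lb"
  have term_le: "weighted_degree t a i + weighted_degree t b (m - i) \<le> M"
    if "coeff a i \<noteq> 0" "coeff b (m - i) \<noteq> 0" for i m
    using a_le[OF that(1)] b_le[OF that(2)] unfolding M_def by linarith
  have term_less: "weighted_degree t a i + weighted_degree t b (m - i) \<le> M - 1"
    if "coeff a i \<noteq> 0" "coeff b (m - i) \<noteq> 0" "i < la \<or> m - i < lb" for i m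
    using that(3) a_le[OF that(1)] b_le[OF that(2)] a_less[OF that(1)] b_less[OF that(2)]
    unfolding M_def by linarith
  have coeff_le: "weighted_degree t (a * b) m \<le> M" if "coeff (a * b) m \<noteq> 0" for m
    using that by (rule weighted_degree_coeff_mult_le) (rule term_le)
  have coeff_less: "weighted_degree t (a * b) m < M" if "m < k" "coeff (a * b) m \<noteq> 0" for m
  proof -
    have "weighted_degree t (a * b) m \<le> M - 1"
    proof (rule weighted_degree_coeff_mult_le)
      fix i assume "i \<le> m" "coeff a i \<noteq> 0" "coeff b (m - i) \<noteq> 0"
      moreover from \<open>i \<le> m\<close> \<open>m < k\<close> have "i < la \<or> m - i < lb" unfolding k_def by auto
      ultimately show "weighted_degree t a i + weighted_degree t b (m - i) \<le> M - 1"
        by (intro term_less)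
    qed fact
    then show ?thesis by simp
  qed
  define T where "T = coeff a la * coeff b lb"
  define R where "R = (\<Sum>i\<in>{..k} - {la}. coeff a i * coeff b (k - i))"
  have "T \<noteq> 0" and deg_T: "int (degree T) + int k * t = M"
    using \<open>coeff a la \<noteq> 0\<close> \<open>coeff b lb \<noteq> 0\<close>
    unfolding T_def M_def weighted_degree_def k_def by (auto simp: degree_mult_eq algebra_simps)
  have "R = 0 \<or> int (degree R) + int k * t \<le> M - 1"
  proof (cases "R = 0")
    case False
    have "int (degree R) + int k * t \<le> M - 1" unfolding R_def
    proof (rule degree_convolution_le)
      fix i assume "i \<in> {..k} - {la}" "coeff a i \<noteq> 0" "coeff b (k - i) \<noteq> 0"
      moreover from \<open>i \<in> {..k} - {la}\<close> have "i < la \<or> k - i < lb" unfolding k_def by auto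
      ultimately show "weighted_degree t a i + weighted_degree t b (k - i) \<le> M - 1"
        by (intro term_less)
    qed (use False in \<open>auto simp: R_def\<close>)
    then show ?thesis ..
  qed simp
  with deg_T have "R = 0 \<or> degree R < degree T" by linarith
  then have "T + R \<noteq> 0 \<and> degree (T + R) = degree T"
    using \<open>T \<noteq> 0\<close> by (metis add.right_neutral degree_add_eq_left degree_0 not_less_zero)
  moreover have "coeff (a * b) k = T + R"
    using sum.remove[of "{..k}" la "\<lambda>i. coeff a i * coeff b (k - i)"]
    unfolding coeff_mult R_def T_def by (simp add: k_def)
  ultimately have "coeff (a * b) k \<noteq> 0" "weighted_degree t (a * b) k = M"
    using deg_T by (simp_all add: weighted_degree_def)
  with coeff_le coeff_less show ?thesis
    unfolding is_weighted_initial_def k_def by auto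
qed

lemma weighted_initial_mult:
  fixes a b :: "'a::idom poly poly"
  shows "a \<noteq> 0 \<Longrightarrow> b \<noteq> 0 \<Longrightarrow> weighted_initial t (a * b) = weighted_initial t a + weighted_initial t b"
  by (intro weighted_initial_eqI is_weighted_initial_mult is_weighted_initial_weighted_initial)

lemma weighted_initial_less_degree:
  fixes P :: "'a::zero poly poly"
  assumes "coeff P 0 \<noteq> 0" and "0 < degree P"
    and "weighted_degree t P (degree P) \<le> weighted_degree t P 0"
  shows "weighted_initial t P < degree P"
proof -
  have "P \<noteq> 0" using assms(1) by auto
  then have "is_weighted_initial t P (weighted_initial t P)" "weighted_initial t P \<le> degree P"
    by (rule is_weighted_initial_weighted_initial, rule weighted_initial_le_degree)
  moreover have "weighted_initial t P \<noteq> degree P"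
  proof
    assume "weighted_initial t P = degree P"
    with \<open>is_weighted_initial t P (weighted_initial t P)\<close> assms(1,2)
    have "weighted_degree t P 0 < weighted_degree t P (degree P)"
      unfolding is_weighted_initial_def by auto
    with assms(3) show False by simp
  qed
  ultimately show ?thesis by simp
qed

lemma coeff_0_neq_0_dvd:
  fixes f g :: "'a::comm_semiring_1 poly"
  shows "g dvd f \<Longrightarrow> coeff f 0 \<noteq> 0 \<Longrightarrow> coeff g 0 \<noteq> 0"
  by (auto elim!: dvdE simp: coeff_mult_0)

lemma degree_lead_coeff_dvd_le:
  fixes f g :: "'a::idom poly poly"
  assumes "g dvd f" and "f \<noteq> 0"
  shows "degree (lead_coeff g) \<le> degree (lead_coeff f)"
proof -
  obtain q where "f = g * q" using assms(1) ..
  with assms(2) have "g \<noteq> 0" "q \<noteq> 0" by auto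
  have "lead_coeff f = lead_coeff g * lead_coeff q"
    unfolding \<open>f = g * q\<close> by (rule lead_coeff_mult)
  with \<open>g \<noteq> 0\<close> \<open>q \<noteq> 0\<close> show ?thesis by (simp add: degree_mult_eq)
qed

lemma degree_pos_dvd_no_constant_factor:
  fixes f g :: "'a::field poly poly"
  assumes no_constant_factor: "\<And>c. [:c:] dvd f \<Longrightarrow> degree c = 0"
    and "f \<noteq> 0" and "g dvd f" and "\<not> is_unit g"
  shows "0 < degree g"
proof (rule ccontr)
  assume "\<not> 0 < degree g"
  then have "g = [:coeff g 0:]" by (simp add: degree_0_id)
  with assms(3) have "degree (coeff g 0) = 0" by (metis no_constant_factor)
  moreover have "coeff g 0 \<noteq> 0" using \<open>g = [:coeff g 0:]\<close> assms(2,3) by auto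
  ultimately have "is_unit g"
    by (subst \<open>g = [:coeff g 0:]\<close>) (simp add: is_unit_const_poly_iff is_unit_iff_degree)
  with assms(4) show False ..
qed

lemma weighted_initial_less_degree_dvd:
  fixes f g :: "'a::field poly poly"
  assumes "coeff f 0 \<noteq> 0" and "\<And>c. [:c:] dvd f \<Longrightarrow> degree c = 0"
    and "g dvd f" and "\<not> is_unit g"
  shows "weighted_initial (- int (degree (lead_coeff f))) g < degree g"
proof (rule weighted_initial_less_degree)
  have "f \<noteq> 0" using assms(1) by auto
  show "coeff g 0 \<noteq> 0" using assms(1,3) by (rule coeff_0_neq_0_dvd[rotated])
  show "0 < degree g" using assms(2) \<open>f \<noteq> 0\<close> assms(3,4) by (rule degree_pos_dvd_no_constant_factor)
  have "degree (lead_coeff g) \<le> degree (lead_coeff f)"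
    using assms(3) \<open>f \<noteq> 0\<close> by (rule degree_lead_coeff_dvd_le)
  with \<open>0 < degree g\<close> have "int (degree (lead_coeff g)) \<le> int (degree g) * int (degree (lead_coeff f))"
    by (metis of_nat_le_iff of_nat_mult le_trans mult_le_cancel2 mult_1 Suc_leI One_nat_def)
  then show "weighted_degree (- int (degree (lead_coeff f))) g (degree g)
      \<le> weighted_degree (- int (degree (lead_coeff f))) g 0"
    unfolding weighted_degree_def by simp
qed

lemma irreducible_factorization_length_le_weighted_initial:
  fixes f :: "'a::field poly poly"
  assumes "coeff f 0 \<noteq> 0" and "\<And>c. [:c:] dvd f \<Longrightarrow> degree c = 0" and "\<not> is_unit f"
  defines "t \<equiv> - int (degree (lead_coeff f))"
  shows "\<exists>fs. length fs \<le> degree f - weighted_initial t f \<and> (\<forall>g\<in>set fs. irreducible g) \<and> f = prod_list fs"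
proof (rule irreducible_factorization_length_le)
  show "f \<noteq> 0" using assms(1) by auto
  show "\<not> f dvd 1" by fact
  show "degree a - weighted_initial t a + (degree b - weighted_initial t b)
      \<le> degree (a * b) - weighted_initial t (a * b)" if "a \<noteq> 0" "b \<noteq> 0" for a b :: "'a poly poly"
    using that weighted_initial_le_degree[OF that(1)] weighted_initial_le_degree[OF that(2)]
    by (simp add: degree_mult_eq weighted_initial_mult)
  show "1 \<le> degree g - weighted_initial t g" if "g dvd f" "\<not> g dvd 1" for g
    using weighted_initial_less_degree_dvd[OF assms(1,2) that] unfolding t_def by simp
qed

theorem theorem7:
  fixes f :: "'a::field poly poly" and n j :: nat
  assumes "n = degree f" and "n \<ge> 2"
    and "coeff f 0 \<noteq> 0" and "coeff f n \<noteq> 0"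
    and "\<And>g :: 'a poly. [:g:] dvd f \<Longrightarrow> degree g = 0"
    and "j \<le> n - 1" and "coeff f j \<noteq> 0"
    and "\<forall>i\<le>n. i \<noteq> j \<and> coeff f i \<noteq> 0 \<longrightarrow>
           int (degree (coeff f j)) > int (degree (coeff f i)) + (int j - int i) * int (degree (coeff f n))"
  shows "(\<exists>fs :: 'a poly poly list. length fs \<le> n - j \<and> (\<forall>g\<in>set fs. irreducible g) \<and> f = prod_list fs)
         \<and> (j = n - 1 \<longrightarrow> irreducible f)"
proof -
  define t where "t = - int (degree (lead_coeff f))"
  have "\<not> is_unit f" using assms(1,2) by (auto simp: is_unit_poly_iff)
  have "weighted_degree t f i < weighted_degree t f j" if "coeff f i \<noteq> 0" "i \<noteq> j" for i
    using assms(8) le_degree[OF that(1)] that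
    unfolding weighted_degree_def t_def assms(1) by (auto simp: algebra_simps)
  with assms(7) have "is_weighted_initial t f j"
    unfolding is_weighted_initial_def by (auto simp: le_less)
  then have "weighted_initial t f = j" by (rule weighted_initial_eqI)
  then obtain fs where fs: "length fs \<le> n - j" "\<forall>g\<in>set fs. irreducible g" "f = prod_list fs"
    using irreducible_factorization_length_le_weighted_initial[OF assms(3,5) \<open>\<not> is_unit f\<close>]
    unfolding t_def assms(1) by blast
  moreover have "irreducible f" if "j = n - 1"
    using fs that assms(2) \<open>\<not> is_unit f\<close> by (cases fs) auto
  ultimately show ?thesis by blast
qed

end
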